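(* Let $X,Y$ be Banach spaces and let $-A$ be the generator of a bounded strongly continuous semigroup $(T(t))_{t\ge0}$ on $X$; assume $A$ is injective and has dense range. Let $C:\mathcal D(A)\to Y$ be bounded (for the graph norm) and infinite-time admissible for $A$, i.e. $\sup_{x\in\mathcal D(A),\|x\|=1}\int_0^\infty\|CT(t)x\|_Y^2\,dt<\infty$. Suppose there exist $\beta\in(0,1)$ and $K,\delta>0$ such that $\|x\|^2\le K^2\int_0^\infty\|(tA)^{-\beta}(T(2t^{2\beta})-T(t^{2\beta}))x\|^2\,\frac{dt}{t}$ for all $x\in X$ and $\|CA^{-(1-\beta)}x\|_Y\ge\delta\|x\|$ for all $x\in\mathcal D(A)\cap\mathcal R(A)$ (understood as $\|CA^{-1}x\|_Y\ge\delta\|A^{-\beta}x\|$). Then $C$ is exactly observable for $A$ in infinite time: there is $m>0$ with $m^2\|x\|^2\le\int_0^\infty\|CT(t)x\|_Y^2\,dt$ for all $x\in\mathcal D(A)$.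
   Context: $\mathcal D(A)$, $\mathcal R(A)$ denote domain and range of $A$. $A^{-\gamma}$ denotes the inverse of the fractional power $A^\gamma$ of the injective sectorial operator $A$, and $(tA)^{-\beta}=t^{-\beta}A^{-\beta}$. *)

theory Defs
  imports "HOL-Analysis.Analysis"
begin

definition C0_semigroup :: "(real \<Rightarrow> 'a::banach \<Rightarrow>\<^sub>L 'a) \<Rightarrow> bool" where
  "C0_semigroup T \<longleftrightarrow> T 0 = id_blinfun
     \<and> (\<forall>s\<ge>0. \<forall>t\<ge>0. T (s + t) = T s o\<^sub>L T t)
     \<and> (\<forall>x. continuous_on {0..} (\<lambda>t. blinfun_apply (T t) x))"

definition bounded_semigroup :: "(real \<Rightarrow> 'a::banach \<Rightarrow>\<^sub>L 'a) \<Rightarrow> bool" where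
  "bounded_semigroup T \<longleftrightarrow> (\<exists>M. \<forall>t\<ge>0. norm (T t) \<le> M)"

text \<open>The operator A such that -A is the generator of T: domain and action.\<close>
definition ngen_dom :: "(real \<Rightarrow> 'a::banach \<Rightarrow>\<^sub>L 'a) \<Rightarrow> 'a set" where
  "ngen_dom T = {x. \<exists>y. ((\<lambda>h. (1 / h) *\<^sub>R (x - blinfun_apply (T h) x)) \<longlongrightarrow> y) (at_right 0)}"

definition ngen :: "(real \<Rightarrow> 'a::banach \<Rightarrow>\<^sub>L 'a) \<Rightarrow> 'a \<Rightarrow> 'a" where
  "ngen T x = Lim (at_right 0) (\<lambda>h. (1 / h) *\<^sub>R (x - blinfun_apply (T h) x))"

definition ngen_inv :: "(real \<Rightarrow> 'a::banach \<Rightarrow>\<^sub>L 'a) \<Rightarrow> 'a \<Rightarrow> 'a" where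
  "ngen_inv T x = (THE y. y \<in> ngen_dom T \<and> ngen T y = x)"

definition resolv :: "(real \<Rightarrow> 'a::banach \<Rightarrow>\<^sub>L 'a) \<Rightarrow> real \<Rightarrow> 'a \<Rightarrow> 'a" where
  "resolv T l y = (THE x. x \<in> ngen_dom T \<and> l *\<^sub>R x + ngen T x = y)"

definition balakrishnan :: "(real \<Rightarrow> 'a::banach \<Rightarrow>\<^sub>L 'a) \<Rightarrow> real \<Rightarrow> 'a \<Rightarrow> 'a" where
  "balakrishnan T \<alpha> x = (sin (pi * \<alpha>) / pi) *\<^sub>R
     integral {0<..} (\<lambda>l. (l powr (\<alpha> - 1)) *\<^sub>R ngen T (resolv T l x))"

text \<open>Graph of the fractional power A^alpha (0 < alpha < 1): the closure of the
  Balakrishnan operator defined on D(A).\<close>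
definition frac_pow_graph :: "(real \<Rightarrow> 'a::banach \<Rightarrow>\<^sub>L 'a) \<Rightarrow> real \<Rightarrow> ('a \<times> 'a) set" where
  "frac_pow_graph T \<alpha> = closure {(x, balakrishnan T \<alpha> x) | x. x \<in> ngen_dom T}"

definition frac_neg_pow :: "(real \<Rightarrow> 'a::banach \<Rightarrow>\<^sub>L 'a) \<Rightarrow> real \<Rightarrow> 'a \<Rightarrow> 'a" where
  "frac_neg_pow T \<alpha> u = (THE v. (v, u) \<in> frac_pow_graph T \<alpha>)"

end

theory Submission
  imports Defs
begin

text \<open>For x in D(A) and s > 0 the increment T(2s)x - T(s)x is A applied to minus the orbit integral
  z = \<integral>_s^{2s} T(r)x dr, so the lower bound on C A^{-1} gives
  \<delta> |A^{-\<beta>}(T(2s)x - T(s)x)| \<le> |C z| \<le> (s \<integral>_s^{2s} |C T(r)x|^2 dr)^{1/2};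
  here C may be moved under the integral because it is bounded for the graph norm, for which the
  orbit integral is a limit of Riemann sums. Put s = t^{2\<beta>} in the square function estimate and
  exchange the order of integration: a fixed r lies in the window [t^{2\<beta>}, 2t^{2\<beta>}] exactly for
  t in [(r/2)^{1/(2\<beta>)}, r^{1/(2\<beta>)}], a set of dt/t-measure ln 2/(2\<beta>). Hence
  |x|^2 \<le> K^2 ln 2/(2\<beta>\<delta>^2) \<integral>_0^\<infinity> |C T(r)x|^2 dr.\<close>

lemma norm_integral_minus_scaleR_le:
  fixes g :: "real \<Rightarrow> 'a::banach"
  assumes cont: "continuous_on {c..c+h} g" and h: "0 \<le> h"
    and close: "\<And>r. r \<in> {c..c+h} \<Longrightarrow> norm (g r - g c) \<le> e"
  shows "norm (integral {c..c+h} g - h *\<^sub>R g c) \<le> h * e"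
proof -
  have int: "g integrable_on {c..c+h}" using cont by (rule integrable_continuous_real)
  have "integral {c..c+h} g - h *\<^sub>R g c = integral {c..c+h} (\<lambda>r. g r - g c)"
    using int h by (subst integral_diff) auto
  also have "norm \<dots> \<le> integral {c..c+h} (\<lambda>r. e)"
    by (rule integral_norm_bound_integral) (auto intro: integrable_diff int close)
  also have "\<dots> = h * e" using h by simp
  finally show ?thesis .
qed

lemma integral_average_tendsto:
  fixes g :: "real \<Rightarrow> 'a::banach"
  assumes cont: "continuous_on {c..c+1} g"
  shows "((\<lambda>h. (1/h) *\<^sub>R integral {c..c+h} g) \<longlongrightarrow> g c) (at_right 0)"
proof (rule tendstoI)
  fix e :: real assume e: "e > 0"
  obtain d where d: "d > 0" "\<And>r. r \<in> {c..c+1} \<Longrightarrow> dist r c < d \<Longrightarrow> dist (g r) (g c) < e/2"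
    using cont e unfolding continuous_on_iff
    by (metis atLeastAtMost_iff half_gt_zero le_add_same_cancel1 order_refl zero_le_one)
  show "\<forall>\<^sub>F h in at_right 0. dist ((1/h) *\<^sub>R integral {c..c+h} g) (g c) < e"
    unfolding eventually_at_right_field
  proof (intro exI[of _ "min d 1"] conjI allI impI)
    show "0 < min d 1" using d by simp
    fix h :: real assume h: "0 < h" "h < min d 1"
    have bound: "norm (integral {c..c+h} g - h *\<^sub>R g c) \<le> h * (e/2)"
      using h d(2) by (intro norm_integral_minus_scaleR_le continuous_on_subset[OF cont])
        (auto simp: dist_norm less_imp_le)
    have "(1/h) *\<^sub>R integral {c..c+h} g - g c = (1/h) *\<^sub>R (integral {c..c+h} g - h *\<^sub>R g c)"
      using h by (simp add: algebra_simps)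
    then have "dist ((1/h) *\<^sub>R integral {c..c+h} g) (g c) = (1/h) * norm (integral {c..c+h} g - h *\<^sub>R g c)"
      using h by (simp add: dist_norm)
    also have "\<dots> \<le> (1/h) * (h * (e/2))" using bound h by (intro mult_left_mono) auto
    also have "\<dots> < e" using h e by simp
    finally show "dist ((1/h) *\<^sub>R integral {c..c+h} g) (g c) < e" .
  qed
qed

lemma integral_uniform_partition:
  fixes g :: "real \<Rightarrow> 'a::banach"
  assumes cont: "continuous_on {a..b} g" and h: "0 \<le> h" and n: "a + real n * h \<le> b"
  shows "integral {a..a + real n * h} g = (\<Sum>i<n. integral {a + real i * h..a + real i * h + h} g)"
  using n
proof (induction n)
  case 0
  then show ?case by simp
next
  case (Suc n)
  have "a + real n * h \<le> b" using Suc.prems h by (simp add: algebra_simps)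
  moreover have "g integrable_on {a..a + real (Suc n) * h}"
    by (rule integrable_continuous_real, rule continuous_on_subset[OF cont]) (use Suc.prems in auto)
  then have "integral {a..a + real (Suc n) * h} g
      = integral {a..a + real n * h} g + integral {a + real n * h..a + real (Suc n) * h} g"
    by (intro Henstock_Kurzweil_Integration.integral_combine[symmetric])
      (use h in \<open>auto simp: algebra_simps\<close>)
  ultimately show ?case using Suc.IH by (simp add: algebra_simps)
qed

lemma riemann_sum_tendsto_integral:
  fixes g :: "real \<Rightarrow> 'a::banach"
  assumes cont: "continuous_on {a..b} g" and ab: "a \<le> b"
  shows "(\<lambda>n. \<Sum>i<n. ((b - a) / n) *\<^sub>R g (a + real i * ((b - a) / n))) \<longlonglongrightarrow> integral {a..b} g"
proof (rule LIMSEQ_I)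
  fix r :: real assume r: "r > 0"
  define e where "e = r / (b - a + 1)"
  have e: "e > 0" using r ab by (simp add: e_def)
  have "uniformly_continuous_on {a..b} g" using cont by (intro compact_uniformly_continuous) auto
  then obtain d where d: "d > 0"
    "\<And>x x'. x \<in> {a..b} \<Longrightarrow> x' \<in> {a..b} \<Longrightarrow> dist x' x < d \<Longrightarrow> dist (g x') (g x) < e"
    using e unfolding uniformly_continuous_on_def by metis
  obtain N :: nat where N: "(b - a) / d < real N" using reals_Archimedean2 by blast
  show "\<exists>no. \<forall>n\<ge>no. norm ((\<Sum>i<n. ((b - a) / n) *\<^sub>R g (a + real i * ((b - a) / n))) - integral {a..b} g) < r"
  proof (intro exI[of _ "Suc N"] allI impI)
    fix n assume n: "Suc N \<le> n"
    define h where "h = (b - a) / real n"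
    have n0: "real n > 0" using n by simp
    have h0: "h \<ge> 0" using ab n0 by (simp add: h_def)
    have "(b - a) / d < real n" using N n by simp
    then have "b - a < real n * d" using d(1) by (simp add: divide_less_eq)
    then have hd: "h < d" using n0 unfolding h_def by (simp add: divide_less_eq mult.commute)
    have nh: "a + real n * h = b" using n0 by (simp add: h_def)
    have cell: "norm (integral {a + real i * h..a + real i * h + h} g - h *\<^sub>R g (a + real i * h)) \<le> h * e"
      if i: "i < n" for i
    proof -
      have "real (Suc i) * h \<le> real n * h" using i h0 by (intro mult_right_mono) auto
      then have "real i * h + h \<le> real n * h" by (simp add: algebra_simps)
      then have sub: "{a + real i * h..a + real i * h + h} \<subseteq> {a..b}" using nh h0 by auto
      show ?thesis
      proof (rule norm_integral_minus_scaleR_le[OF continuous_on_subset[OF cont sub] h0])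
        fix x assume x: "x \<in> {a + real i * h..a + real i * h + h}"
        then have "dist x (a + real i * h) < d" using hd by (auto simp: dist_real_def)
        then show "norm (g x - g (a + real i * h)) \<le> e"
          using d(2) x sub h0 by (fastforce simp: dist_norm)
      qed
    qed
    have "(\<Sum>i<n. ((b - a) / n) *\<^sub>R g (a + real i * ((b - a) / n))) - integral {a..b} g
        = - (\<Sum>i<n. integral {a + real i * h..a + real i * h + h} g - h *\<^sub>R g (a + real i * h))"
      using integral_uniform_partition[OF cont h0, of n] nh by (simp add: sum_subtractf h_def)
    also have "norm \<dots> \<le> (\<Sum>i<n. h * e)"
      unfolding norm_minus_cancel by (rule order_trans[OF norm_sum sum_mono]) (use cell in auto)
    also have "\<dots> = (b - a) * e" using n0 by (simp add: h_def)
    also have "\<dots> < r" using r ab by (simp add: e_def field_simps)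
    finally show "norm ((\<Sum>i<n. ((b - a) / n) *\<^sub>R g (a + real i * ((b - a) / n))) - integral {a..b} g) < r" .
  qed
qed

lemma integral_square_le:
  fixes g :: "real \<Rightarrow> real"
  assumes cont: "continuous_on {a..b} g" and ab: "a \<le> b"
  shows "(integral {a..b} g)\<^sup>2 \<le> (b - a) * integral {a..b} (\<lambda>r. (g r)\<^sup>2)"
proof (cases "a = b")
  case True
  then show ?thesis by simp
next
  case False
  then have len: "b - a > 0" using ab by simp
  define I where "I = integral {a..b} g"
  define J where "J = integral {a..b} (\<lambda>r. (g r)\<^sup>2)"
  define m where "m = I / (b - a)"
  have ig: "g integrable_on {a..b}" and ig2: "(\<lambda>r. (g r)\<^sup>2) integrable_on {a..b}"
    by (auto intro!: integrable_continuous_real continuous_intros cont)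
  \<comment> \<open>the variance of g about its mean value m is nonnegative\<close>
  have "0 \<le> integral {a..b} (\<lambda>r. (g r - m)\<^sup>2)"
    by (rule integral_nonneg) (auto intro!: integrable_continuous_real continuous_intros cont)
  also have "integral {a..b} (\<lambda>r. (g r - m)\<^sup>2) = integral {a..b} (\<lambda>r. (g r)\<^sup>2 - (2 * m) * g r + m\<^sup>2)"
    by (rule integral_cong) (simp add: power2_eq_square algebra_simps)
  also have "\<dots> = J - (2 * m) * I + (b - a) * m\<^sup>2"
  proof (rule integral_unique)
    show "((\<lambda>r. (g r)\<^sup>2 - (2 * m) * g r + m\<^sup>2) has_integral J - (2 * m) * I + (b - a) * m\<^sup>2) {a..b}"
      using has_integral_const_real[of "m\<^sup>2" a b] ab unfolding I_def J_def
      by (intro has_integral_add has_integral_diff has_integral_mult_right integrable_integral ig ig2) auto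
  qed
  also have "\<dots> = J - I\<^sup>2 / (b - a)"
  proof -
    have "(b - a) * m\<^sup>2 = I\<^sup>2 / (b - a)" "(2 * m) * I = 2 * (I\<^sup>2 / (b - a))"
      using len by (simp_all add: m_def power2_eq_square)
    then show ?thesis by linarith
  qed
  finally show ?thesis using len unfolding I_def J_def by (simp add: divide_le_eq mult.commute)
qed

locale linear_bounded_on =
  fixes S :: "'v::banach set" and L :: "'v \<Rightarrow> 'w::banach"
  assumes subspace: "subspace S"
    and add: "\<And>x y. x \<in> S \<Longrightarrow> y \<in> S \<Longrightarrow> L (x + y) = L x + L y"
    and scale: "\<And>c x. x \<in> S \<Longrightarrow> L (c *\<^sub>R x) = c *\<^sub>R L x"
    and bounded: "\<exists>B. \<forall>x\<in>S. norm (L x) \<le> B * norm x"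
begin

lemma zero: "L 0 = 0"
  using scale[of 0 0] subspace_0[OF subspace] by simp

lemma diff:
  assumes "x \<in> S" "y \<in> S"
  shows "L (x - y) = L x - L y"
proof -
  have "L (x + (-1) *\<^sub>R y) = L x + (-1) *\<^sub>R L y"
    using assms add scale subspace_scale[OF subspace] by metis
  then show ?thesis by simp
qed

lemma sum: "(\<And>i. i \<in> I \<Longrightarrow> f i \<in> S) \<Longrightarrow> L (\<Sum>i\<in>I. f i) = (\<Sum>i\<in>I. L (f i))"
proof (induction I rule: infinite_finite_induct)
  case (insert i I)
  then have "f i \<in> S" "sum f I \<in> S" by (auto intro: subspace_sum[OF subspace])
  then show ?case using insert by (simp add: add)
qed (simp_all add: zero)

lemma tendsto_compose:
  assumes lim: "(\<gamma> \<longlongrightarrow> y) F" and S: "\<forall>\<^sub>F r in F. \<gamma> r \<in> S" and y: "y \<in> S"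
  shows "((\<lambda>r. L (\<gamma> r)) \<longlongrightarrow> L y) F"
proof -
  obtain B where B: "\<And>x. x \<in> S \<Longrightarrow> norm (L x) \<le> B * norm x" using bounded by blast
  show ?thesis
  proof (rule LIM_zero_cancel, rule Lim_null_comparison)
    show "\<forall>\<^sub>F r in F. norm (L (\<gamma> r) - L y) \<le> B * norm (\<gamma> r - y)"
      using S by eventually_elim (metis B diff subspace_diff[OF subspace] y)
    show "((\<lambda>r. B * norm (\<gamma> r - y)) \<longlongrightarrow> 0) F"
      using tendsto_mult_right_zero[OF tendsto_norm_zero[OF LIM_zero[OF lim]]] .
  qed
qed

lemma continuous_on_compose:
  assumes "continuous_on A \<gamma>" and "\<gamma> ` A \<subseteq> S"
  shows "continuous_on A (\<lambda>r. L (\<gamma> r))"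
  unfolding continuous_on_def
proof
  fix x assume "x \<in> A"
  moreover have "\<forall>\<^sub>F r in at x within A. \<gamma> r \<in> S"
    using assms(2) unfolding eventually_at_filter by (intro always_eventually) auto
  ultimately show "((\<lambda>r. L (\<gamma> r)) \<longlongrightarrow> L (\<gamma> x)) (at x within A)"
    using assms unfolding continuous_on_def by (intro tendsto_compose) auto
qed

lemma integral:
  fixes a b :: real
  assumes cont: "continuous_on {a..b} \<gamma>" and S: "\<gamma> ` {a..b} \<subseteq> S"
    and int: "integral {a..b} \<gamma> \<in> S" and ab: "a \<le> b"
  shows "L (integral {a..b} \<gamma>) = integral {a..b} (\<lambda>r. L (\<gamma> r))"
proof -
  define R where "R = (\<lambda>(n::nat). \<Sum>i<n. ((b - a) / n) *\<^sub>R \<gamma> (a + real i * ((b - a) / n)))"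
  have node: "a + real i * ((b - a) / n) \<in> {a..b}" if "i < n" for i n
  proof -
    have "real i * ((b - a) / n) \<le> b - a"
      using that ab by (simp add: divide_simps mult_right_mono mult.commute)
    then show ?thesis using ab by simp
  qed
  have node_S: "\<gamma> (a + real i * ((b - a) / n)) \<in> S" if "i \<in> {..<n}" for i n
    using node[of i n] that S by auto
  have R: "R n \<in> S" for n
    unfolding R_def using node_S by (intro subspace_sum[OF subspace] subspace_scale[OF subspace])
  have "(\<lambda>n. L (R n)) \<longlonglongrightarrow> L (integral {a..b} \<gamma>)"
    using R int by (intro tendsto_compose riemann_sum_tendsto_integral[OF cont ab, folded R_def]) auto
  moreover have "L (R n) = (\<Sum>i<n. ((b - a) / n) *\<^sub>R L (\<gamma> (a + real i * ((b - a) / n))))" for n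
    unfolding R_def using node_S subspace_scale[OF subspace]
    by (subst sum) (auto intro!: sum.cong scale simp del: times_divide_eq_right)
  ultimately have "(\<lambda>n. \<Sum>i<n. ((b - a) / n) *\<^sub>R L (\<gamma> (a + real i * ((b - a) / n))))
      \<longlonglongrightarrow> L (integral {a..b} \<gamma>)" by simp
  then show ?thesis
    using riemann_sum_tendsto_integral[OF continuous_on_compose[OF cont S] ab] LIMSEQ_unique by blast
qed

end

lemma powr_le_iff_le_powr_inverse:
  fixes a b e :: real
  assumes "0 < a" "0 < b" "0 < e"
  shows "a powr e \<le> b \<longleftrightarrow> a \<le> b powr (1 / e)"
proof
  assume "a powr e \<le> b"
  then have "(a powr e) powr (1 / e) \<le> b powr (1 / e)" using assms by (intro powr_mono2) auto
  then show "a \<le> b powr (1 / e)" using assms by (simp add: powr_powr)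
next
  assume "a \<le> b powr (1 / e)"
  then have "a powr e \<le> (b powr (1 / e)) powr e" using assms by (intro powr_mono2) auto
  then show "a powr e \<le> b" using assms by (simp add: powr_powr)
qed

definition window_kernel :: "real \<Rightarrow> real \<Rightarrow> real \<Rightarrow> real" where
  "window_kernel e t r = indicator {0<..} t * indicator {t powr e..2 * t powr e} r / t"

lemma borel_measurable_window_kernel [measurable]:
  assumes [measurable]: "f \<in> borel_measurable M" "g \<in> borel_measurable M"
  shows "(\<lambda>x. window_kernel e (f x) (g x)) \<in> borel_measurable M"
proof -
  have "(\<lambda>x. window_kernel e (f x) (g x)) = (\<lambda>x. (if 0 < f x \<and> f x powr e \<le> g x \<and> g x \<le> 2 * f x powr e
      then 1 else 0) / f x)"
    by (auto simp: fun_eq_iff window_kernel_def indicator_def)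
  also have "\<dots> \<in> borel_measurable M" by measurable
  finally show ?thesis .
qed

lemma window_kernel_eq_indicator:
  fixes e r t :: real
  assumes e: "0 < e" and r: "0 < r"
  shows "window_kernel e t r = indicator {(r / 2) powr (1 / e)..r powr (1 / e)} t / t"
proof (cases "0 < t")
  case True
  have "t powr e \<le> r \<and> r \<le> 2 * t powr e \<longleftrightarrow> (r / 2) powr (1 / e) \<le> t \<and> t \<le> r powr (1 / e)"
    using powr_le_iff_le_powr_inverse[OF True r e] powr_le_iff_le_powr_inverse[of "r / 2" t "1 / e"] True r e
    by auto
  then show ?thesis using True by (simp add: window_kernel_def indicator_def)
next
  case False
  have "0 < (r / 2) powr (1 / e)" using r by simp
  then have "\<not> (r / 2) powr (1 / e) \<le> t" using False by linarith
  with False show ?thesis by (simp add: window_kernel_def indicator_def)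
qed

lemma nn_integral_window_kernel_le:
  fixes e r :: real
  assumes e: "0 < e" and r: "0 \<le> r"
  shows "(\<integral>\<^sup>+ t. ennreal (window_kernel e t r) \<partial>lborel) \<le> ennreal (ln 2 / e)"
proof (cases "r = 0")
  case True
  then have "window_kernel e t r = 0" for t by (simp add: window_kernel_def indicator_def)
  then show ?thesis by simp
next
  case False
  then have r: "0 < r" using r by simp
  define lo where "lo = (r / 2) powr (1 / e)"
  define hi where "hi = r powr (1 / e)"
  have lo: "0 < lo" and lo_hi: "lo \<le> hi"
    using r e unfolding lo_def hi_def by (auto intro: powr_mono2)
  have "((\<lambda>t. 1 / t) has_integral (ln hi - ln lo)) {lo..hi}"
  proof (rule fundamental_theorem_of_calculus[OF lo_hi])
    fix t assume "t \<in> {lo..hi}"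
    then have "0 < t" using lo by simp
    then show "(ln has_vector_derivative 1 / t) (at t within {lo..hi})"
      by (auto intro!: derivative_eq_intros simp flip: has_real_derivative_iff_has_vector_derivative)
  qed
  moreover have "(\<lambda>t. indicator {lo..hi} t / t) = (\<lambda>t. if t \<in> {lo..hi} then 1 / t else 0)"
    by (simp add: fun_eq_iff indicator_def)
  ultimately have "((\<lambda>t. indicator {lo..hi} t / t) has_integral (ln hi - ln lo)) UNIV"
    using has_integral_restrict_UNIV[of "{lo..hi}" "\<lambda>t. 1 / t"] by simp
  then have "(\<integral>\<^sup>+ t. ennreal (indicator {lo..hi} t / t) \<partial>lborel) = ennreal (ln hi - ln lo)"
    using lo by (intro nn_integral_has_integral_lborel) (auto simp: indicator_def)
  also have "ln hi - ln lo = ln 2 / e"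
    using r e unfolding hi_def lo_def by (simp add: ln_div diff_divide_distrib[symmetric])
  finally show ?thesis by (simp add: window_kernel_eq_indicator[OF e r] lo_def hi_def)
qed

lemma ennreal_window_average_eq_nn_integral:
  fixes f :: "real \<Rightarrow> real" and e t :: real
  assumes cont: "continuous_on {0..} f" and nonneg: "\<And>r. 0 \<le> r \<Longrightarrow> 0 \<le> f r"
  shows "ennreal (integral {t powr e..2 * t powr e} f / t) * indicator {0<..} t
    = (\<integral>\<^sup>+ r. ennreal (window_kernel e t r) * ennreal (indicator {0..} r * f r) \<partial>lborel)"
proof (cases "0 < t")
  case False
  then show ?thesis by (simp add: window_kernel_def)
next
  case True
  define s where "s = t powr e"
  define f' where "f' = (\<lambda>r. indicator {0..} r * f r)"
  have s: "0 < s" using True by (simp add: s_def)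
  have [measurable]: "f' \<in> borel_measurable borel"
    using borel_measurable_continuous_on_indicator[OF _ cont] by (simp add: f'_def)
  have f'_nonneg: "0 \<le> f' r" for r by (simp add: f'_def nonneg indicator_def)
  have "(f has_integral integral {s..2 * s} f) {s..2 * s}"
    using s by (intro integrable_integral integrable_continuous_real continuous_on_subset[OF cont]) auto
  moreover have "(\<lambda>r. indicator {s..2 * s} r * f' r) = (\<lambda>r. if r \<in> {s..2 * s} then f r else 0)"
    using s by (auto simp: fun_eq_iff indicator_def f'_def)
  ultimately have "((\<lambda>r. indicator {s..2 * s} r * f' r) has_integral integral {s..2 * s} f) UNIV"
    using has_integral_restrict_UNIV[of "{s..2 * s}" f] by simp
  then have "ennreal (integral {s..2 * s} f) = (\<integral>\<^sup>+ r. ennreal (indicator {s..2 * s} r * f' r) \<partial>lborel)"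
    by (intro nn_integral_has_integral_lborel[symmetric]) (auto simp: f'_nonneg)
  moreover have "ennreal (integral {s..2 * s} f / t) = ennreal (1 / t) * ennreal (integral {s..2 * s} f)"
    using True by (simp add: ennreal_mult'[symmetric])
  ultimately have "ennreal (integral {s..2 * s} f / t)
      = (\<integral>\<^sup>+ r. ennreal (1 / t) * ennreal (indicator {s..2 * s} r * f' r) \<partial>lborel)"
    by (simp add: nn_integral_cmult)
  also have "\<dots> = (\<integral>\<^sup>+ r. ennreal (window_kernel e t r) * ennreal (f' r) \<partial>lborel)"
    using True f'_nonneg
    by (intro nn_integral_cong) (simp add: window_kernel_def s_def ennreal_mult'[symmetric] mult.assoc)
  finally show ?thesis using True by (simp add: s_def f'_def)
qed

lemma nn_integral_window_average_le:
  fixes f :: "real \<Rightarrow> real" and e :: real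
  assumes e: "0 < e" and cont: "continuous_on {0..} f" and nonneg: "\<And>r. 0 \<le> r \<Longrightarrow> 0 \<le> f r"
  shows "(\<integral>\<^sup>+ t\<in>{0<..}. ennreal (integral {t powr e..2 * t powr e} f / t) \<partial>lborel)
    \<le> ennreal (ln 2 / e) * (\<integral>\<^sup>+ r\<in>{0..}. ennreal (f r) \<partial>lborel)"
proof -
  define f' where "f' = (\<lambda>r. indicator {0..} r * f r)"
  have f'_meas [measurable]: "f' \<in> borel_measurable borel"
    using borel_measurable_continuous_on_indicator[OF _ cont] by (simp add: f'_def)
  have "(\<integral>\<^sup>+ t\<in>{0<..}. ennreal (integral {t powr e..2 * t powr e} f / t) \<partial>lborel)
      = (\<integral>\<^sup>+ t. \<integral>\<^sup>+ r. ennreal (window_kernel e t r) * ennreal (f' r) \<partial>lborel \<partial>lborel)"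
    unfolding f'_def by (simp add: ennreal_window_average_eq_nn_integral[OF cont nonneg])
  also have "\<dots> = (\<integral>\<^sup>+ r. \<integral>\<^sup>+ t. ennreal (window_kernel e t r) * ennreal (f' r) \<partial>lborel \<partial>lborel)"
    by (rule lborel_pair.Fubini'[symmetric]) measurable
  also have "\<dots> = (\<integral>\<^sup>+ r. (\<integral>\<^sup>+ t. ennreal (window_kernel e t r) \<partial>lborel) * ennreal (f' r) \<partial>lborel)"
    by (intro nn_integral_cong nn_integral_multc) measurable
  also have "\<dots> \<le> (\<integral>\<^sup>+ r. ennreal (ln 2 / e) * ennreal (f' r) \<partial>lborel)"
  proof (rule nn_integral_mono)
    fix r
    show "(\<integral>\<^sup>+ t. ennreal (window_kernel e t r) \<partial>lborel) * ennreal (f' r) \<le> ennreal (ln 2 / e) * ennreal (f' r)"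
      by (cases "0 \<le> r") (auto simp: f'_def intro!: mult_right_mono nn_integral_window_kernel_le[OF e])
  qed
  also have "\<dots> = ennreal (ln 2 / e) * (\<integral>\<^sup>+ r\<in>{0..}. ennreal (f r) \<partial>lborel)"
  proof -
    have "(\<integral>\<^sup>+ r. ennreal (f' r) \<partial>lborel) = (\<integral>\<^sup>+ r\<in>{0..}. ennreal (f r) \<partial>lborel)"
      by (intro nn_integral_cong) (simp add: f'_def indicator_def)
    then show ?thesis by (simp add: nn_integral_cmult)
  qed
  finally show ?thesis .
qed

lemma set_nn_integral_divide_continuous:
  fixes f :: "real \<Rightarrow> real" and c :: real
  assumes cont: "continuous_on {0..} f" and c: "0 \<le> c"
  shows "(\<integral>\<^sup>+ r\<in>{0..}. ennreal (f r / c) \<partial>lborel) = ennreal (1 / c) * (\<integral>\<^sup>+ r\<in>{0..}. ennreal (f r) \<partial>lborel)"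
proof -
  have [measurable]: "(\<lambda>r. indicator {0..} r * f r) \<in> borel_measurable borel"
    using borel_measurable_continuous_on_indicator[OF _ cont] by simp
  have "(\<integral>\<^sup>+ r\<in>{0..}. ennreal (f r / c) \<partial>lborel)
      = (\<integral>\<^sup>+ r. ennreal (1 / c) * ennreal (indicator {0..} r * f r) \<partial>lborel)"
    using c by (intro nn_integral_cong) (simp add: indicator_def ennreal_mult'[symmetric])
  also have "\<dots> = ennreal (1 / c) * (\<integral>\<^sup>+ r. ennreal (indicator {0..} r * f r) \<partial>lborel)"
    by (rule nn_integral_cmult) measurable
  also have "(\<integral>\<^sup>+ r. ennreal (indicator {0..} r * f r) \<partial>lborel) = (\<integral>\<^sup>+ r\<in>{0..}. ennreal (f r) \<partial>lborel)"
    by (intro nn_integral_cong) (simp add: indicator_def)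
  finally show ?thesis .
qed

definition ngen_graph :: "(real \<Rightarrow> 'a::banach \<Rightarrow>\<^sub>L 'a) \<Rightarrow> ('a \<times> 'a) set" where
  "ngen_graph T = {(x, u). ((\<lambda>h. (1 / h) *\<^sub>R (x - T h x)) \<longlongrightarrow> u) (at_right 0)}"

lemma ngen_graph_iff: "(x, u) \<in> ngen_graph T \<longleftrightarrow> x \<in> ngen_dom T \<and> ngen T x = u"
  unfolding ngen_graph_def ngen_dom_def ngen_def
  by (auto intro: tendsto_Lim simp: tendsto_Lim[OF trivial_limit_at_right_real])

lemma subspace_ngen_graph: "subspace (ngen_graph T)"
  unfolding subspace_def
proof (intro conjI ballI allI)
  show "0 \<in> ngen_graph T" by (simp add: ngen_graph_def zero_prod_def)
next
  fix c and p :: "'a \<times> 'a" assume "p \<in> ngen_graph T"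
  then obtain x u where p: "p = (x, u)" and "((\<lambda>h. (1 / h) *\<^sub>R (x - T h x)) \<longlongrightarrow> u) (at_right 0)"
    unfolding ngen_graph_def by blast
  then have "((\<lambda>h. c *\<^sub>R ((1 / h) *\<^sub>R (x - T h x))) \<longlongrightarrow> c *\<^sub>R u) (at_right 0)"
    by (intro tendsto_scaleR tendsto_const)
  moreover have "(\<lambda>h. c *\<^sub>R ((1 / h) *\<^sub>R (x - T h x))) = (\<lambda>h. (1 / h) *\<^sub>R (c *\<^sub>R x - T h (c *\<^sub>R x)))"
    by (simp add: fun_eq_iff blinfun.scaleR_right algebra_simps)
  ultimately show "c *\<^sub>R p \<in> ngen_graph T" unfolding p ngen_graph_def by simp
next
  fix p q :: "'a \<times> 'a" assume "p \<in> ngen_graph T" "q \<in> ngen_graph T"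
  then obtain x u y v where pq: "p = (x, u)" "q = (y, v)"
    and "((\<lambda>h. (1 / h) *\<^sub>R (x - T h x)) \<longlongrightarrow> u) (at_right 0)"
      "((\<lambda>h. (1 / h) *\<^sub>R (y - T h y)) \<longlongrightarrow> v) (at_right 0)"
    unfolding ngen_graph_def by blast
  then have "((\<lambda>h. (1 / h) *\<^sub>R (x - T h x) + (1 / h) *\<^sub>R (y - T h y)) \<longlongrightarrow> u + v) (at_right 0)"
    by (intro tendsto_add)
  moreover have "(\<lambda>h. (1 / h) *\<^sub>R (x - T h x) + (1 / h) *\<^sub>R (y - T h y)) = (\<lambda>h. (1 / h) *\<^sub>R (x + y - T h (x + y)))"
    by (simp add: fun_eq_iff blinfun.add_right algebra_simps)
  ultimately show "p + q \<in> ngen_graph T" unfolding pq ngen_graph_def by simp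
qed

lemma ngen_inv_eq:
  assumes "inj_on (ngen T) (ngen_dom T)" and "(x, u) \<in> ngen_graph T"
  shows "ngen_inv T u = x"
  unfolding ngen_inv_def using assms ngen_graph_iff
  by (intro the_equality) (auto dest: inj_onD)

lemma C0_semigroup_apply_add:
  "C0_semigroup T \<Longrightarrow> 0 \<le> s \<Longrightarrow> 0 \<le> t \<Longrightarrow> T s (T t x) = T (s + t) x"
  unfolding C0_semigroup_def by simp

lemma C0_semigroup_commute:
  "C0_semigroup T \<Longrightarrow> 0 \<le> s \<Longrightarrow> 0 \<le> t \<Longrightarrow> T s (T t x) = T t (T s x)"
  by (simp add: C0_semigroup_apply_add add.commute)

lemma C0_semigroup_continuous_on: "C0_semigroup T \<Longrightarrow> continuous_on {0..} (\<lambda>t. T t x)"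
  unfolding C0_semigroup_def by simp

lemma C0_semigroup_continuous_on_interval:
  "C0_semigroup T \<Longrightarrow> 0 \<le> a \<Longrightarrow> continuous_on {a..b} (\<lambda>t. T t x)"
  by (erule continuous_on_subset[OF C0_semigroup_continuous_on]) auto

lemma ngen_graph_semigroup_apply:
  assumes sg: "C0_semigroup T" and xu: "(x, u) \<in> ngen_graph T" and r: "0 \<le> r"
  shows "(T r x, T r u) \<in> ngen_graph T"
proof -
  have "((\<lambda>h. T r ((1 / h) *\<^sub>R (x - T h x))) \<longlongrightarrow> T r u) (at_right 0)"
    using xu unfolding ngen_graph_def by (intro blinfun.tendsto tendsto_const) auto
  moreover have "\<forall>\<^sub>F h in at_right 0. T r ((1 / h) *\<^sub>R (x - T h x)) = (1 / h) *\<^sub>R (T r x - T h (T r x))"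
    using eventually_at_right_less
    by eventually_elim (simp add: C0_semigroup_commute[OF sg r] blinfun.scaleR_right blinfun.diff_right)
  ultimately show ?thesis unfolding ngen_graph_def by (auto intro: Lim_transform_eventually)
qed

lemma ngen_graph_integral:
  assumes sg: "C0_semigroup T" and ab: "0 \<le> a" "a \<le> b"
  shows "(integral {a..b} (\<lambda>r. T r v), T a v - T b v) \<in> ngen_graph T"
proof -
  define g where "g = (\<lambda>r. T r v)"
  have int: "g integrable_on {c..d}" if "0 \<le> c" for c d
    unfolding g_def using that sg by (intro integrable_continuous_real C0_semigroup_continuous_on_interval)
  have split: "integral {c..d} g = integral {c..e} g + integral {e..d} g"
    if "0 \<le> c" "c \<le> e" "e \<le> d" for c d e
    using that int by (intro Henstock_Kurzweil_Integration.integral_combine[symmetric]) auto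
  have "((\<lambda>h. (1/h) *\<^sub>R integral {a..a+h} g - (1/h) *\<^sub>R integral {b..b+h} g) \<longlongrightarrow> g a - g b) (at_right 0)"
    unfolding g_def using ab sg by (intro tendsto_diff integral_average_tendsto C0_semigroup_continuous_on_interval) auto
  moreover have "\<forall>\<^sub>F h in at_right 0. (1/h) *\<^sub>R integral {a..a+h} g - (1/h) *\<^sub>R integral {b..b+h} g =
      (1 / h) *\<^sub>R (integral {a..b} g - T h (integral {a..b} g))"
    using eventually_at_right_less
  proof eventually_elim
    case (elim h)
    \<comment> \<open>T h shifts the window [a,b] to [a+h,b+h]\<close>
    have "T h (integral {a..b} g) = integral {a..b} (T h \<circ> g)"
      by (rule integral_linear[symmetric, OF int[OF ab(1)] blinfun.bounded_linear_right])
    also have "\<dots> = integral {a..b} (g \<circ> (+) h)"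
      using ab elim by (intro integral_cong) (simp add: g_def C0_semigroup_apply_add[OF sg])
    also have "\<dots> = integral {a+h..b+h} g"
      by (simp add: integral_shift_Icc_real add.commute)
    finally have "T h (integral {a..b} g) = integral {a+h..b+h} g" .
    moreover have "integral {a..b+h} g = integral {a..a+h} g + integral {a+h..b+h} g"
      "integral {a..b+h} g = integral {a..b} g + integral {b..b+h} g"
      using ab elim by (auto intro!: split)
    ultimately have "integral {a..a+h} g - integral {b..b+h} g = integral {a..b} g - T h (integral {a..b} g)"
      by (simp add: algebra_simps)
    then show ?case by (simp flip: scaleR_diff_right)
  qed
  ultimately show ?thesis unfolding ngen_graph_def g_def by (auto intro: Lim_transform_eventually)
qed

lemma tendsto_integral_semigroup:
  assumes sg: "C0_semigroup T" and bdd: "bounded_semigroup T"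
    and lim: "(q \<longlongrightarrow> u) F" and ab: "0 \<le> a" "a \<le> b"
  shows "((\<lambda>h. integral {a..b} (\<lambda>r. T r (q h))) \<longlongrightarrow> integral {a..b} (\<lambda>r. T r u)) F"
proof -
  obtain M where M: "\<And>t. 0 \<le> t \<Longrightarrow> norm (T t) \<le> M"
    using bdd unfolding bounded_semigroup_def by blast
  have int: "(\<lambda>r. T r w) integrable_on {a..b}" for w
    using sg ab by (intro integrable_continuous_real C0_semigroup_continuous_on_interval)
  have bound: "norm (integral {a..b} (\<lambda>r. T r (q h)) - integral {a..b} (\<lambda>r. T r u))
      \<le> (b - a) * M * norm (q h - u)" for h
  proof -
    have "norm (integral {a..b} (\<lambda>r. T r (q h)) - integral {a..b} (\<lambda>r. T r u))
        = norm (integral {a..b} (\<lambda>r. T r (q h - u)))"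
      by (simp add: integral_diff[OF int int, symmetric] blinfun.diff_right)
    also have "\<dots> \<le> integral {a..b} (\<lambda>r. M * norm (q h - u))"
      using M ab by (intro integral_norm_bound_integral int integrable_const_ivl)
        (auto intro!: order_trans[OF norm_blinfun] mult_right_mono)
    also have "\<dots> = (b - a) * M * norm (q h - u)" using ab by simp
    finally show ?thesis .
  qed
  have "((\<lambda>h. (b - a) * M * norm (q h - u)) \<longlongrightarrow> 0) F"
    using lim by (intro tendsto_mult_right_zero tendsto_norm_zero LIM_zero)
  then show ?thesis
    by (rule LIM_zero_cancel[OF Lim_null_comparison[OF always_eventually[OF allI[OF bound]]]])
qed

lemma integral_semigroup_ngen:
  assumes sg: "C0_semigroup T" and bdd: "bounded_semigroup T"
    and xu: "(x, u) \<in> ngen_graph T" and ab: "0 \<le> a" "a \<le> b"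
  shows "integral {a..b} (\<lambda>r. T r u) = T a x - T b x"
proof -
  define q where "q = (\<lambda>h. (1 / h) *\<^sub>R (x - T h x))"
  define z where "z = integral {a..b} (\<lambda>r. T r x)"
  have int: "(\<lambda>r. T r w) integrable_on {a..b}" for w
    using sg ab by (intro integrable_continuous_real C0_semigroup_continuous_on_interval)
  \<comment> \<open>the orbit integral of the difference quotient q h is the difference quotient of z\<close>
  have "((\<lambda>h. (1 / h) *\<^sub>R (z - T h z)) \<longlongrightarrow> T a x - T b x) (at_right 0)"
    using ngen_graph_integral[OF sg ab, of x] unfolding ngen_graph_def z_def by simp
  moreover have "\<forall>\<^sub>F h in at_right 0. (1 / h) *\<^sub>R (z - T h z) = integral {a..b} (\<lambda>r. T r (q h))"
    using eventually_at_right_less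
  proof eventually_elim
    case (elim h)
    have "integral {a..b} (\<lambda>r. T r (q h)) = integral {a..b} (\<lambda>r. (1 / h) *\<^sub>R (T r x - (T h \<circ> (\<lambda>r. T r x)) r))"
      using ab elim by (intro integral_cong)
        (simp add: q_def blinfun.scaleR_right blinfun.diff_right C0_semigroup_commute[OF sg])
    also have "\<dots> = (1 / h) *\<^sub>R (z - integral {a..b} (T h \<circ> (\<lambda>r. T r x)))"
      unfolding integral_cmul z_def
      by (subst integral_diff[OF int integrable_linear[OF int blinfun.bounded_linear_right]]) (rule refl)
    also have "\<dots> = (1 / h) *\<^sub>R (z - T h z)"
      unfolding z_def integral_linear[OF int blinfun.bounded_linear_right] ..
    finally show ?case by simp
  qed
  ultimately have lim_x: "((\<lambda>h. integral {a..b} (\<lambda>r. T r (q h))) \<longlongrightarrow> T a x - T b x) (at_right 0)"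
    by (rule Lim_transform_eventually)
  have "(q \<longlongrightarrow> u) (at_right 0)" using xu unfolding ngen_graph_def q_def by simp
  then have lim_u: "((\<lambda>h. integral {a..b} (\<lambda>r. T r (q h))) \<longlongrightarrow> integral {a..b} (\<lambda>r. T r u)) (at_right 0)"
    by (rule tendsto_integral_semigroup[OF sg bdd _ ab])
  show ?thesis using tendsto_unique[OF _ lim_u lim_x] by simp
qed

lemma linear_bounded_on_ngen_graph:
  assumes C_lin: "\<forall>x\<in>ngen_dom T. \<forall>y\<in>ngen_dom T. \<forall>c. C (x + y) = C x + C y \<and> C (c *\<^sub>R x) = c *\<^sub>R C x"
    and C_bdd: "\<exists>c. \<forall>x\<in>ngen_dom T. norm (C x) \<le> c * (norm x + norm (ngen T x))"
  shows "linear_bounded_on (ngen_graph T) (\<lambda>p. C (fst p))"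
proof
  obtain c where c: "\<And>x. x \<in> ngen_dom T \<Longrightarrow> norm (C x) \<le> c * (norm x + norm (ngen T x))"
    using C_bdd by blast
  have "norm (C x) \<le> (2 * \<bar>c\<bar>) * norm (x, u)" if "(x, u) \<in> ngen_graph T" for x u
  proof -
    have "norm (C x) \<le> \<bar>c\<bar> * (norm x + norm u)"
      using c[of x] that abs_ge_self[of c] unfolding ngen_graph_iff
      by (smt (verit, best) mult_right_mono norm_ge_zero)
    also have "\<dots> \<le> \<bar>c\<bar> * (2 * norm (x, u))"
      using norm_fst_le[of x u] norm_snd_le[of u x] by (intro mult_left_mono) auto
    finally show ?thesis by simp
  qed
  then show "\<exists>B. \<forall>p\<in>ngen_graph T. norm (C (fst p)) \<le> B * norm p" by fastforce
qed (use C_lin subspace_ngen_graph in \<open>auto simp: ngen_graph_iff\<close>)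

lemma continuous_on_observation:
  assumes sg: "C0_semigroup T" and L: "linear_bounded_on (ngen_graph T) (\<lambda>p. C (fst p))"
    and x: "x \<in> ngen_dom T"
  shows "continuous_on {0..} (\<lambda>r. C (T r x))"
proof -
  have "(\<lambda>r. (T r x, T r (ngen T x))) ` {0..} \<subseteq> ngen_graph T"
    using ngen_graph_semigroup_apply[OF sg, of x "ngen T x"] x by (auto simp: ngen_graph_iff)
  then show ?thesis
    using linear_bounded_on.continuous_on_compose[OF L, of "{0..}" "\<lambda>r. (T r x, T r (ngen T x))"]
    by (simp add: continuous_on_Pair C0_semigroup_continuous_on[OF sg])
qed

lemma integral_observation_commute:
  assumes sg: "C0_semigroup T" and bdd: "bounded_semigroup T"
    and L: "linear_bounded_on (ngen_graph T) (\<lambda>p. C (fst p))"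
    and x: "x \<in> ngen_dom T" and ab: "0 \<le> a" "a \<le> b"
  shows "C (integral {a..b} (\<lambda>r. T r x)) = integral {a..b} (\<lambda>r. C (T r x))"
proof -
  define \<gamma> where "\<gamma> = (\<lambda>r. (T r x, T r (ngen T x)))"
  have xu: "(x, ngen T x) \<in> ngen_graph T" using x by (simp add: ngen_graph_iff)
  have cont: "continuous_on {a..b} \<gamma>"
    unfolding \<gamma>_def using sg ab by (intro continuous_on_Pair C0_semigroup_continuous_on_interval)
  then have "\<gamma> integrable_on {a..b}" by (rule integrable_continuous_real)
  then have int_eq: "integral {a..b} \<gamma> = (integral {a..b} (\<lambda>r. T r x), integral {a..b} (\<lambda>r. T r (ngen T x)))"
    unfolding \<gamma>_def
    by (simp add: prod_eq_iff integral_linear[OF _ bounded_linear_fst, symmetric]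
        integral_linear[OF _ bounded_linear_snd, symmetric] comp_def)
  have "integral {a..b} \<gamma> \<in> ngen_graph T"
    using int_eq ngen_graph_integral[OF sg ab] integral_semigroup_ngen[OF sg bdd xu ab] by simp
  moreover have "\<gamma> ` {a..b} \<subseteq> ngen_graph T"
    unfolding \<gamma>_def using ngen_graph_semigroup_apply[OF sg xu] ab by auto
  ultimately have "C (fst (integral {a..b} \<gamma>)) = integral {a..b} (\<lambda>r. C (fst (\<gamma> r)))"
    using linear_bounded_on.integral[OF L cont _ _ ab(2)] by blast
  then show ?thesis using int_eq unfolding \<gamma>_def by simp
qed

lemma norm_frac_neg_pow_increment_le:
  fixes T :: "real \<Rightarrow> 'a::banach \<Rightarrow>\<^sub>L 'a" and C :: "'a \<Rightarrow> 'b::banach"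
  assumes sg: "C0_semigroup T" and bdd: "bounded_semigroup T"
    and inj: "inj_on (ngen T) (ngen_dom T)"
    and L: "linear_bounded_on (ngen_graph T) (\<lambda>p. C (fst p))"
    and lower: "\<forall>y\<in>ngen_dom T \<inter> ngen T ` ngen_dom T. \<delta> * norm (frac_neg_pow T \<beta> y) \<le> norm (C (ngen_inv T y))"
    and \<delta>: "0 \<le> \<delta>" and x: "x \<in> ngen_dom T" and s: "0 < s"
  shows "\<delta>\<^sup>2 * (norm (frac_neg_pow T \<beta> (T (2 * s) x - T s x)))\<^sup>2
    \<le> s * integral {s..2 * s} (\<lambda>r. (norm (C (T r x)))\<^sup>2)"
proof -
  define y where "y = T (2 * s) x - T s x"
  define z where "z = integral {s..2 * s} (\<lambda>r. T r x)"
  have zG: "(z, T s x - T (2 * s) x) \<in> ngen_graph T"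
    unfolding z_def using s by (intro ngen_graph_integral[OF sg]) auto
  then have "(- z, y) \<in> ngen_graph T"
    using subspace_neg[OF subspace_ngen_graph zG] unfolding y_def by simp
  moreover have "(T (2 * s) x, T (2 * s) (ngen T x)) \<in> ngen_graph T" "(T s x, T s (ngen T x)) \<in> ngen_graph T"
    using x s ngen_graph_semigroup_apply[OF sg, of x "ngen T x"] by (simp_all add: ngen_graph_iff)
  then have "y \<in> ngen_dom T"
    using subspace_diff[OF subspace_ngen_graph] unfolding y_def by (fastforce simp: ngen_graph_iff)
  \<comment> \<open>the increment y is A applied to minus the integral of the orbit, so A^{-1} y = -z\<close>
  ultimately have "y \<in> ngen_dom T \<inter> ngen T ` ngen_dom T" and "ngen_inv T y = - z"
    using ngen_inv_eq[OF inj] by (auto simp: ngen_graph_iff)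
  moreover have "C (- z) = - C z"
    using linear_bounded_on.scale[OF L zG, of "- 1"] by simp
  ultimately have "\<delta> * norm (frac_neg_pow T \<beta> y) \<le> norm (C z)"
    using lower[rule_format, of y] by simp
  also have "C z = integral {s..2 * s} (\<lambda>r. C (T r x))"
    unfolding z_def using s by (intro integral_observation_commute[OF sg bdd L x]) auto
  also have "norm \<dots> \<le> integral {s..2 * s} (\<lambda>r. norm (C (T r x)))"
    using continuous_on_observation[OF sg L x] s
    by (intro integral_norm_bound_integral integrable_continuous_real continuous_intros)
      (auto elim: continuous_on_subset)
  finally have "(\<delta> * norm (frac_neg_pow T \<beta> y))\<^sup>2 \<le> (integral {s..2 * s} (\<lambda>r. norm (C (T r x))))\<^sup>2"
    using \<delta> by (intro power_mono) auto
  also have "\<dots> \<le> (2 * s - s) * integral {s..2 * s} (\<lambda>r. (norm (C (T r x)))\<^sup>2)"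
    using continuous_on_observation[OF sg L x] s
    by (intro integral_square_le continuous_intros) (auto elim: continuous_on_subset)
  finally show ?thesis unfolding y_def by (simp add: power_mult_distrib)
qed

lemma square_function_integrand_le:
  fixes T :: "real \<Rightarrow> 'a::banach \<Rightarrow>\<^sub>L 'a" and C :: "'a \<Rightarrow> 'b::banach"
  assumes sg: "C0_semigroup T" and bdd: "bounded_semigroup T"
    and inj: "inj_on (ngen T) (ngen_dom T)"
    and L: "linear_bounded_on (ngen_graph T) (\<lambda>p. C (fst p))"
    and lower: "\<forall>y\<in>ngen_dom T \<inter> ngen T ` ngen_dom T. \<delta> * norm (frac_neg_pow T \<beta> y) \<le> norm (C (ngen_inv T y))"
    and \<delta>: "0 < \<delta>" and x: "x \<in> ngen_dom T" and t: "0 < t"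
  shows "(norm ((t powr (-\<beta>)) *\<^sub>R frac_neg_pow T \<beta> (T (2 * t powr (2 * \<beta>)) x - T (t powr (2 * \<beta>)) x)))\<^sup>2 / t
    \<le> integral {t powr (2 * \<beta>)..2 * t powr (2 * \<beta>)} (\<lambda>r. (norm (C (T r x)))\<^sup>2 / \<delta>\<^sup>2) / t"
proof -
  define s where "s = t powr (2 * \<beta>)"
  define P where "P = frac_neg_pow T \<beta> (T (2 * s) x - T s x)"
  have s: "0 < s" using t by (simp add: s_def)
  have "s = t powr \<beta> * t powr \<beta>" unfolding s_def by (simp add: powr_add[symmetric])
  then have t_pow: "(t powr (-\<beta>))\<^sup>2 = 1 / s" using t by (simp add: power2_eq_square powr_minus divide_inverse)
  have "\<delta>\<^sup>2 * (norm P)\<^sup>2 \<le> s * integral {s..2 * s} (\<lambda>r. (norm (C (T r x)))\<^sup>2)"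
    unfolding P_def using norm_frac_neg_pow_increment_le[OF sg bdd inj L lower _ x s] \<delta> by simp
  then have "(norm P)\<^sup>2 / s \<le> integral {s..2 * s} (\<lambda>r. (norm (C (T r x)))\<^sup>2) / \<delta>\<^sup>2"
    using s \<delta> by (simp add: field_simps)
  also have "\<dots> = integral {s..2 * s} (\<lambda>r. (norm (C (T r x)))\<^sup>2 / \<delta>\<^sup>2)"
    by (simp add: divide_inverse integral_mult_left)
  finally have "(norm P)\<^sup>2 / s / t \<le> integral {s..2 * s} (\<lambda>r. (norm (C (T r x)))\<^sup>2 / \<delta>\<^sup>2) / t"
    using t by (intro divide_right_mono) auto
  then show ?thesis
    using t_pow t unfolding s_def[symmetric] P_def[symmetric] by (simp add: power_mult_distrib)
qed

lemma square_function_le_observation: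
  fixes T :: "real \<Rightarrow> 'a::banach \<Rightarrow>\<^sub>L 'a" and C :: "'a \<Rightarrow> 'b::banach"
  assumes sg: "C0_semigroup T" and bdd: "bounded_semigroup T"
    and inj: "inj_on (ngen T) (ngen_dom T)"
    and L: "linear_bounded_on (ngen_graph T) (\<lambda>p. C (fst p))"
    and lower: "\<forall>y\<in>ngen_dom T \<inter> ngen T ` ngen_dom T. \<delta> * norm (frac_neg_pow T \<beta> y) \<le> norm (C (ngen_inv T y))"
    and \<beta>: "0 < \<beta>" and \<delta>: "0 < \<delta>" and x: "x \<in> ngen_dom T"
  shows "(\<integral>\<^sup>+ t\<in>{0<..}. ennreal ((norm ((t powr (-\<beta>)) *\<^sub>R frac_neg_pow T \<beta>
            (T (2 * t powr (2 * \<beta>)) x - T (t powr (2 * \<beta>)) x)))\<^sup>2 / t) \<partial>lborel)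
    \<le> ennreal (ln 2 / (2 * \<beta> * \<delta>\<^sup>2)) * (\<integral>\<^sup>+ t\<in>{0..}. ennreal ((norm (C (T t x)))\<^sup>2) \<partial>lborel)"
proof -
  define g where "g = (\<lambda>r. (norm (C (T r x)))\<^sup>2 / \<delta>\<^sup>2)"
  have g_cont: "continuous_on {0..} g"
    unfolding g_def using \<delta> by (intro continuous_intros continuous_on_observation[OF sg L x]) auto
  have "ennreal ((norm ((t powr (-\<beta>)) *\<^sub>R frac_neg_pow T \<beta> (T (2 * t powr (2 * \<beta>)) x - T (t powr (2 * \<beta>)) x)))\<^sup>2 / t)
      \<le> ennreal (integral {t powr (2 * \<beta>)..2 * t powr (2 * \<beta>)} g / t)" if "0 < t" for t
    unfolding g_def using square_function_integrand_le[OF sg bdd inj L lower \<delta> x that] by (rule ennreal_leI)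
  then have "(\<integral>\<^sup>+ t\<in>{0<..}. ennreal ((norm ((t powr (-\<beta>)) *\<^sub>R frac_neg_pow T \<beta>
            (T (2 * t powr (2 * \<beta>)) x - T (t powr (2 * \<beta>)) x)))\<^sup>2 / t) \<partial>lborel)
      \<le> (\<integral>\<^sup>+ t\<in>{0<..}. ennreal (integral {t powr (2 * \<beta>)..2 * t powr (2 * \<beta>)} g / t) \<partial>lborel)"
    by (intro nn_integral_mono) (simp add: indicator_def)
  also have "\<dots> \<le> ennreal (ln 2 / (2 * \<beta>)) * (\<integral>\<^sup>+ r\<in>{0..}. ennreal (g r) \<partial>lborel)"
    using \<beta> by (intro nn_integral_window_average_le g_cont) (auto simp: g_def)
  also have "(\<integral>\<^sup>+ r\<in>{0..}. ennreal (g r) \<partial>lborel)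
      = ennreal (1 / \<delta>\<^sup>2) * (\<integral>\<^sup>+ t\<in>{0..}. ennreal ((norm (C (T t x)))\<^sup>2) \<partial>lborel)"
    unfolding g_def
    by (intro set_nn_integral_divide_continuous continuous_intros continuous_on_observation[OF sg L x]) simp
  also have "ennreal (ln 2 / (2 * \<beta>)) * (ennreal (1 / \<delta>\<^sup>2) * (\<integral>\<^sup>+ t\<in>{0..}. ennreal ((norm (C (T t x)))\<^sup>2) \<partial>lborel))
      = ennreal (ln 2 / (2 * \<beta> * \<delta>\<^sup>2)) * (\<integral>\<^sup>+ t\<in>{0..}. ennreal ((norm (C (T t x)))\<^sup>2) \<partial>lborel)"
    using \<beta> by (simp add: ennreal_mult'[symmetric] mult.assoc[symmetric])
  finally show ?thesis .
qed

theorem corollary4p5: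
  fixes T :: "real \<Rightarrow> 'a::banach \<Rightarrow>\<^sub>L 'a" and C :: "'a \<Rightarrow> 'b::banach"
    and \<beta> K \<delta> :: real
  assumes sg: "C0_semigroup T" and bdd: "bounded_semigroup T"
    and inj: "inj_on (ngen T) (ngen_dom T)"
    and dense: "closure (ngen T ` ngen_dom T) = UNIV"
    and C_lin: "\<forall>x\<in>ngen_dom T. \<forall>y\<in>ngen_dom T. \<forall>c. C (x + y) = C x + C y \<and> C (c *\<^sub>R x) = c *\<^sub>R C x"
    and C_bdd: "\<exists>c. \<forall>x\<in>ngen_dom T. norm (C x) \<le> c * (norm x + norm (ngen T x))"
    and C_adm: "\<exists>M. \<forall>x\<in>ngen_dom T. norm x = 1 \<longrightarrow>
                  (\<integral>\<^sup>+ t\<in>{0..}. ennreal ((norm (C (blinfun_apply (T t) x)))\<^sup>2) \<partial>lborel) \<le> ennreal M"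
    and \<beta>: "0 < \<beta>" "\<beta> < 1" and K: "K > 0" and \<delta>: "\<delta> > 0"
    and sqfun: "\<forall>x. ennreal ((norm x)\<^sup>2) \<le> ennreal (K\<^sup>2) *
       (\<integral>\<^sup>+ t\<in>{0<..}. ennreal ((norm ((t powr (-\<beta>)) *\<^sub>R frac_neg_pow T \<beta>
            (blinfun_apply (T (2 * t powr (2 * \<beta>))) x - blinfun_apply (T (t powr (2 * \<beta>))) x)))\<^sup>2 / t) \<partial>lborel)"
    and lower: "\<forall>x\<in>ngen_dom T \<inter> ngen T ` ngen_dom T.
       norm (C (ngen_inv T x)) \<ge> \<delta> * norm (frac_neg_pow T \<beta> x)"
  shows "\<exists>m>0. \<forall>x\<in>ngen_dom T. ennreal (m\<^sup>2 * (norm x)\<^sup>2) \<le>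
           (\<integral>\<^sup>+ t\<in>{0..}. ennreal ((norm (C (blinfun_apply (T t) x)))\<^sup>2) \<partial>lborel)"
proof -
  define \<kappa> where "\<kappa> = ln 2 / (2 * \<beta> * \<delta>\<^sup>2)"
  define m where "m = 1 / (K * sqrt \<kappa>)"
  have "0 < \<kappa>" using \<beta> \<delta> by (simp add: \<kappa>_def)
  then have m: "0 < m" "m\<^sup>2 * (K\<^sup>2 * \<kappa>) = 1" using K by (simp_all add: m_def power_divide power_mult_distrib)
  note L = linear_bounded_on_ngen_graph[OF C_lin C_bdd]
  show ?thesis
  proof (intro exI[of _ m] conjI ballI m(1))
    fix x assume x: "x \<in> ngen_dom T"
    let ?F = "\<integral>\<^sup>+ t\<in>{0..}. ennreal ((norm (C (T t x)))\<^sup>2) \<partial>lborel"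
    have "ennreal ((norm x)\<^sup>2) \<le> ennreal (K\<^sup>2) * (ennreal \<kappa> * ?F)"
      using sqfun square_function_le_observation[OF sg bdd inj L _ \<beta>(1) \<delta> x] lower
      unfolding \<kappa>_def by (fastforce intro: order_trans mult_left_mono)
    then have "ennreal (m\<^sup>2) * ennreal ((norm x)\<^sup>2) \<le> ennreal (m\<^sup>2 * (K\<^sup>2 * \<kappa>)) * ?F"
      using \<open>0 < \<kappa>\<close> by (simp add: mult_left_mono ennreal_mult mult.assoc)
    then show "ennreal (m\<^sup>2 * (norm x)\<^sup>2) \<le> ?F" by (simp add: m(2) ennreal_mult)
  qed
qed

end
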